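(* Fix $\varepsilon>0$ and an integer $r\ge100$ with $\frac{3r-1}{r-1}\left(\frac27-\frac\varepsilon2\right)<\frac67-\varepsilon$. Let $n^{0.99}<t<n$, $u=n-t$, let $\mathcal S$ be a $t$-intersecting family of partial permutations each of size at most $q$ ($t\le q\le n$) with peeling families $\mathcal T_k,\mathcal W_k$, let $1\le k\le\min(q-t,t^{2/7-\varepsilon/2})$, and let $A_1,\dots,A_r\in\mathcal W_k$ satisfy $|A_1\cap\cdots\cap A_r|=t-(r-2)k$. Set $\mathcal T_k'=\mathcal T_k\setminus\{T\subseteq A_1\cup\cdots\cup A_r:|T|=t+k\}$. Then, in the regime $t\to\infty$, $k\to\infty$, $k/u\to0$, uniformly over all $\mathcal F\subseteq\Sigma_n$, $$|\mathcal F[\mathcal T_k']|=o\Big(\max_{0\le j\le\lfloor (n-t)/2\rfloor}|\mathcal A_j|\Big).$$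
   Context: Each permutation $\sigma$ of $[n]$ is identified with the set $\{(i,\sigma(i)):i\in[n]\}\subseteq[n]^2$, and $\Sigma_n$ is the collection of these sets; a partial permutation is a subset of such a set. For a family $\mathcal F$ and a family $\mathcal T$, $\mathcal F[\mathcal T]=\{F\in\mathcal F: T\subseteq F\text{ for some }T\in\mathcal T\}$. A family is $t$-intersecting if any two (not necessarily distinct) members $A,B$ have $|A\cap B|\ge t$. $\mathcal A_j=\{F\in\Sigma_n: F \text{ contains at least } t+j \text{ elements of } \{(1,1),\dots,(t+2j,t+2j)\}\}$. A simplification of a $t$-intersecting family is any family obtained by repeatedly applying, in any order, the following operations until neither applies: (i) delete a member that is contained in another, different member; (ii) replace a member $S$ by a proper subset $X\subsetneq S$ provided the resulting family is still $t$-intersecting. Peeling: $\mathcal T_{q-t}$ is a simplification of $\mathcal S$, and for $k=q-t,q-t-1,\dots,1$, $\mathcal W_k=\{T\in\mathcal T_k:|T|=t+k\}$ and $\mathcal T_{k-1}$ is a simplification of $\mathcal T_k\setminus\mathcal W_k$ (any choices of simplifications are allowed). *)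

theory Defs
  imports Main "HOL-Analysis.Analysis"
begin

type_synonym cell = "nat \<times> nat"

definition Sigma_n :: "nat \<Rightarrow> cell set set" where
  "Sigma_n n = {{(i, \<sigma> i) | i. i \<in> {1..n}} | \<sigma>. bij_betw \<sigma> {1..n} {1..n}}"

definition partial_perm :: "nat \<Rightarrow> cell set \<Rightarrow> bool" where
  "partial_perm n P \<longleftrightarrow> (\<exists>F \<in> Sigma_n n. P \<subseteq> F)"

definition generated :: "cell set set \<Rightarrow> cell set set \<Rightarrow> cell set set" where
  "generated \<F> \<T> = {F \<in> \<F>. \<exists>T \<in> \<T>. T \<subseteq> F}"

definition t_intersecting :: "nat \<Rightarrow> cell set set \<Rightarrow> bool" where
  "t_intersecting t \<F> \<longleftrightarrow> (\<forall>A \<in> \<F>. \<forall>B \<in> \<F>. card (A \<inter> B) \<ge> t)"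

definition A_fam :: "nat \<Rightarrow> nat \<Rightarrow> nat \<Rightarrow> cell set set" where
  "A_fam n t j = {F \<in> Sigma_n n. card (F \<inter> {(i, i) | i. i \<in> {1..t + 2*j}}) \<ge> t + j}"

definition simp_step :: "nat \<Rightarrow> cell set set \<Rightarrow> cell set set \<Rightarrow> bool" where
  "simp_step t \<F> \<G> \<longleftrightarrow>
     (\<exists>A \<in> \<F>. \<exists>B \<in> \<F>. A \<noteq> B \<and> A \<subseteq> B \<and> \<G> = \<F> - {A}) \<or>
     (\<exists>S \<in> \<F>. \<exists>X. X \<subset> S \<and> \<G> = (\<F> - {S}) \<union> {X} \<and> t_intersecting t \<G>)"

definition simplification :: "nat \<Rightarrow> cell set set \<Rightarrow> cell set set \<Rightarrow> bool" where
  "simplification t \<S> \<T> \<longleftrightarrow> (simp_step t)\<^sup>*\<^sup>* \<S> \<T> \<and> \<not> (\<exists>\<G>. simp_step t \<T> \<G>)"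

definition W_fam :: "nat \<Rightarrow> (nat \<Rightarrow> cell set set) \<Rightarrow> nat \<Rightarrow> cell set set" where
  "W_fam t \<T> k = {T \<in> \<T> k. card T = t + k}"

definition peeling :: "nat \<Rightarrow> nat \<Rightarrow> cell set set \<Rightarrow> (nat \<Rightarrow> cell set set) \<Rightarrow> bool" where
  "peeling t q \<S> \<T> \<longleftrightarrow> simplification t \<S> (\<T> (q - t)) \<and>
     (\<forall>k \<in> {1..q - t}. simplification t (\<T> k - W_fam t \<T> k) (\<T> (k - 1)))"

end

theory Submission
  imports Defs "HOL-Combinatorics.Permutations"
begin

(* Let U and C be the union and the intersection of A 1, ..., A r. Pairwise t-intersection
   forces card C >= t - (r - 2) k, and in the extremal case every element of U lies in all but
   at most one A i. A member T of the pruned family meets each A i in at least t elements but is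
   not a (t + k)-subset of U, so its trace T \<inter> U has t + m elements with m < k, and counting
   degrees shows that it misses only a <= m - (r - 2)(k - m) elements of C. There are at most
   (t choose a) (r k)^(2k - m - a) such traces, each lying in at most (n - t - m)! permutations,
   whereas A_fam n t m contains the permutations fixing exactly t + m points of {1..t + 2m}, at
   least ((t + 2m) choose m) (n - t - m)! / 2 of them. When k^7 <= t^2 and k >= 4 r^4, the
   quotient (t choose a) (r k)^(2k - m - a) / (t choose m) is at most 64 r^12 / k^3, so each of
   the k^2 pairs (m, a) contributes at most \<delta> / k^2 times the largest card (A_fam n t j)
   once k >= 128 r^12 / \<delta>. *)

definition perm_graph :: "nat \<Rightarrow> (nat \<Rightarrow> nat) \<Rightarrow> cell set" where
  "perm_graph n p = (\<lambda>i. (i, p i)) ` {1..n}"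

lemma Sigma_n_eq_perm_graphs: "Sigma_n n = perm_graph n ` {p. p permutes {1..n}}"
proof (intro equalityI subsetI)
  fix s assume "s \<in> Sigma_n n"
  then obtain f where s: "s = perm_graph n f" and f: "bij_betw f {1..n} {1..n}"
    unfolding Sigma_n_def perm_graph_def by blast
  define p where "p x = (if x \<in> {1..n} then f x else x)" for x
  have "bij_betw p {1..n} {1..n}"
    using f bij_betw_cong[of "{1..n}" f p] by (simp add: p_def)
  then have "p permutes {1..n}"
    by (rule bij_imp_permutes) (auto simp: p_def)
  moreover have "s = perm_graph n p" unfolding s perm_graph_def p_def by auto
  ultimately show "s \<in> perm_graph n ` {p. p permutes {1..n}}" by blast
next
  fix s assume "s \<in> perm_graph n ` {p. p permutes {1..n}}"
  then show "s \<in> Sigma_n n"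
    unfolding Sigma_n_def perm_graph_def using permutes_imp_bij by blast
qed

lemma finite_perm_graph [simp]: "finite (perm_graph n p)"
  by (simp add: perm_graph_def)

lemma finite_Sigma_n: "finite (Sigma_n n)"
  by (simp add: Sigma_n_eq_perm_graphs finite_permutations)

lemma finite_partial_perm: "partial_perm n P \<Longrightarrow> finite P"
  unfolding partial_perm_def Sigma_n_eq_perm_graphs
  using finite_subset[OF _ finite_perm_graph] by blast

lemma inj_on_perm_graph: "inj_on (perm_graph n) {p. p permutes {1..n}}"
proof (rule inj_onI)
  fix p q assume p: "p \<in> {p. p permutes {1..n}}" and q: "q \<in> {p. p permutes {1..n}}"
    and eq: "perm_graph n p = perm_graph n q"
  show "p = q"
  proof
    fix x show "p x = q x"
    proof (cases "x \<in> {1..n}")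
      case True
      then have "(x, p x) \<in> perm_graph n q" using eq unfolding perm_graph_def by blast
      then show ?thesis unfolding perm_graph_def by auto
    next
      case False
      then show ?thesis using p q by (simp add: permutes_not_in)
    qed
  qed
qed

lemma permutes_Diff_fixed:
  assumes "p permutes S" "\<forall>x\<in>D. p x = x"
  shows "p permutes (S - D)"
  using assms unfolding permutes_def by (metis Diff_iff)

lemma card_Sigma_n_containing_le:
  assumes "finite W"
  shows "card {s \<in> Sigma_n n. W \<subseteq> s} \<le> fact (n - card W)"
proof (cases "{s \<in> Sigma_n n. W \<subseteq> s} = {}")
  case False
  then obtain f0 where f0: "f0 permutes {1..n}" "W \<subseteq> perm_graph n f0"
    unfolding Sigma_n_eq_perm_graphs by blast
  define D where "D = fst ` W"
  have W_eq: "W = (\<lambda>i. (i, f0 i)) ` D"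
  proof (intro equalityI subsetI)
    fix w assume "w \<in> W"
    then show "w \<in> (\<lambda>i. (i, f0 i)) ` D"
      using f0(2) unfolding D_def perm_graph_def by force
  qed (use f0(2) in \<open>force simp: D_def perm_graph_def\<close>)
  have card_D: "card D = card W"
    unfolding W_eq by (simp add: card_image inj_on_def)
  have D_sub: "D \<subseteq> {1..n}" using f0(2) unfolding D_def perm_graph_def by auto
  \<comment> \<open>a permutation extending W is f0 composed with a permutation fixing D\<close>
  have "{s \<in> Sigma_n n. W \<subseteq> s} \<subseteq> (\<lambda>p. perm_graph n (f0 \<circ> p)) ` {p. p permutes ({1..n} - D)}"
  proof
    fix s assume "s \<in> {s \<in> Sigma_n n. W \<subseteq> s}"
    then obtain f where f: "f permutes {1..n}" "s = perm_graph n f" "W \<subseteq> perm_graph n f"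
      unfolding Sigma_n_eq_perm_graphs by blast
    have "f i = f0 i" if "i \<in> D" for i
      using that f(3) unfolding W_eq perm_graph_def by auto
    then have "\<forall>x\<in>D. (inv f0 \<circ> f) x = x"
      using permutes_inverses(2)[OF f0(1)] by simp
    then have "inv f0 \<circ> f permutes ({1..n} - D)"
      by (intro permutes_Diff_fixed permutes_compose f(1) permutes_inv f0(1))
    moreover have "f0 \<circ> (inv f0 \<circ> f) = f"
      using permutes_inverses(1)[OF f0(1)] by (auto simp: fun_eq_iff)
    ultimately show "s \<in> (\<lambda>p. perm_graph n (f0 \<circ> p)) ` {p. p permutes ({1..n} - D)}"
      using f(2) by (metis (mono_tags, lifting) image_eqI mem_Collect_eq)
  qed
  then have "card {s \<in> Sigma_n n. W \<subseteq> s} \<le> card ((\<lambda>p. perm_graph n (f0 \<circ> p)) ` {p. p permutes ({1..n} - D)})"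
    by (intro card_mono finite_imageI) (auto intro: finite_permutations)
  also have "\<dots> \<le> card {p. p permutes ({1..n} - D)}"
    by (intro card_image_le) (auto intro: finite_permutations)
  also have "\<dots> = fact (n - card W)"
    using D_sub card_D by (simp add: card_permutations card_Diff_subset finite_subset)
  finally show ?thesis .
qed (simp only: card.empty le0)

lemma fact_le_card_permutes_fixpoint_free_on:
  assumes "finite R" "D \<subseteq> R" "2 * card D \<le> card R"
  shows "fact (card R) \<le> 2 * card {p. p permutes R \<and> (\<forall>x\<in>D. p x \<noteq> x)}"
proof (cases "D = {}")
  case True
  then show ?thesis using assms(1) by (simp add: card_permutations)
next
  case False
  let ?free = "{p. p permutes R \<and> (\<forall>x\<in>D. p x \<noteq> x)}"
  have D: "finite D" using assms(1,2) finite_subset by blast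
  obtain c where c: "card R = Suc c"
    using False D assms(2,3) by (metis card_0_eq le_zero_eq mult_is_0 not0_implies_Suc zero_neq_numeral)
  have "{p. p permutes R} \<subseteq> ?free \<union> (\<Union>x\<in>D. {p. p permutes (R - {x})})"
    using permutes_Diff_fixed[of _ R "{_}"] by auto
  then have "card {p. p permutes R} \<le> card (?free \<union> (\<Union>x\<in>D. {p. p permutes (R - {x})}))"
    using assms(1) D by (intro card_mono) (auto intro!: finite_permutations)
  also have "\<dots> \<le> card ?free + (\<Sum>x\<in>D. card {p. p permutes (R - {x})})"
    using card_Un_le card_UN_le[OF D] add_left_mono le_trans by blast
  also have "(\<Sum>x\<in>D. card {p. p permutes (R - {x})}) = card D * fact c"
    using assms(1,2) c by (simp add: card_permutations subset_iff)
  finally have "fact (Suc c) \<le> card ?free + card D * fact c"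
    using assms(1) c by (simp add: card_permutations)
  moreover have "2 * (card D * fact c) \<le> Suc c * fact c"
    unfolding mult.assoc[symmetric] using assms(3) c by (intro mult_right_mono) simp_all
  ultimately show ?thesis
    unfolding c fact_Suc of_nat_id by linarith
qed

lemma perm_graph_Int_diagonal:
  assumes "p permutes ({1..n} - S)" "S \<subseteq> N" "N \<subseteq> {1..n}" "\<forall>x\<in>N - S. p x \<noteq> x"
  shows "perm_graph n p \<inter> (\<lambda>i. (i, i)) ` N = (\<lambda>i. (i, i)) ` S"
proof (intro equalityI subsetI)
  fix x assume "x \<in> perm_graph n p \<inter> (\<lambda>i. (i, i)) ` N"
  then obtain i where "x = (i, i)" "i \<in> N" "p i = i" unfolding perm_graph_def by auto
  then show "x \<in> (\<lambda>i. (i, i)) ` S" using assms(4) by blast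
next
  fix x assume "x \<in> (\<lambda>i. (i, i)) ` S"
  then obtain i where i: "x = (i, i)" "i \<in> S" by blast
  then have "p i = i" using assms(1) by (simp add: permutes_not_in)
  then show "x \<in> perm_graph n p \<inter> (\<lambda>i. (i, i)) ` N"
    using i assms(2,3) unfolding perm_graph_def by (auto intro!: image_eqI[of _ _ i])
qed

definition fixing_exactly :: "nat \<Rightarrow> nat set \<Rightarrow> nat set \<Rightarrow> cell set set" where
  "fixing_exactly n N S = {s \<in> Sigma_n n. s \<inter> (\<lambda>i. (i, i)) ` N = (\<lambda>i. (i, i)) ` S}"

lemma card_fixing_exactly_ge:
  assumes "S \<subseteq> N" "N \<subseteq> {1..n}" "2 * card (N - S) \<le> n - card S"
  shows "fact (n - card S) \<le> 2 * card (fixing_exactly n N S)"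
proof -
  let ?P = "{p. p permutes ({1..n} - S) \<and> (\<forall>x\<in>N - S. p x \<noteq> x)}"
  have perm: "p permutes {1..n}" if "p \<in> ?P" for p
    using that by (auto intro: permutes_subset)
  have "perm_graph n ` ?P \<subseteq> fixing_exactly n N S"
  proof (rule image_subsetI)
    fix p assume "p \<in> ?P"
    then show "perm_graph n p \<in> fixing_exactly n N S"
      using perm perm_graph_Int_diagonal[of p n S N] assms(1,2)
      unfolding fixing_exactly_def Sigma_n_eq_perm_graphs by simp
  qed
  then have "card (perm_graph n ` ?P) \<le> card (fixing_exactly n N S)"
    by (rule card_mono[rotated]) (simp add: fixing_exactly_def finite_Sigma_n)
  moreover have "card (perm_graph n ` ?P) = card ?P"
    using perm by (intro card_image inj_on_subset[OF inj_on_perm_graph]) blast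
  moreover have "card ({1..n} - S) = n - card S"
    using assms(1,2) by (simp add: card_Diff_subset finite_subset)
  then have "fact (n - card S) \<le> 2 * card ?P"
    using fact_le_card_permutes_fixpoint_free_on[of "{1..n} - S" "N - S"] assms by auto
  ultimately show ?thesis by linarith
qed

lemma card_A_fam_ge:
  assumes "t + 3 * m \<le> n"
  shows "((t + 2 * m) choose m) * fact (n - t - m) \<le> 2 * card (A_fam n t m)"
proof -
  define N where "N = {1..t + 2 * m}"
  define SS where "SS = {S. S \<subseteq> N \<and> card S = t + m}"
  have N: "N \<subseteq> {1..n}" "finite N" using assms by (auto simp: N_def)
  have "card SS = (t + 2 * m) choose m"
    using n_subsets[of N "t + m"] binomial_symmetric[of "t + m" "t + 2 * m"]
    by (simp add: SS_def N_def)
  then have "((t + 2 * m) choose m) * fact (n - t - m) = (\<Sum>S\<in>SS. fact (n - card S))"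
    by (simp add: SS_def)
  also have "\<dots> \<le> (\<Sum>S\<in>SS. 2 * card (fixing_exactly n N S))"
  proof (rule sum_mono)
    fix S assume "S \<in> SS"
    then have "S \<subseteq> N" "card S = t + m" by (auto simp: SS_def)
    moreover have "card (N - S) = m"
      using calculation N by (simp add: card_Diff_subset finite_subset N_def)
    ultimately show "fact (n - card S) \<le> 2 * card (fixing_exactly n N S)"
      using assms N by (intro card_fixing_exactly_ge) auto
  qed
  also have "\<dots> = 2 * card (\<Union>S\<in>SS. fixing_exactly n N S)"
  proof -
    have "inj (\<lambda>i :: nat. (i, i))" by (simp add: inj_on_def)
    then show ?thesis
      using N(2) finite_Sigma_n by (subst card_UN_disjoint)
        (auto simp: SS_def fixing_exactly_def sum_distrib_left inj_image_eq_iff)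
  qed
  also have "\<dots> \<le> 2 * card (A_fam n t m)"
  proof (intro mult_left_mono card_mono)
    show "(\<Union>S\<in>SS. fixing_exactly n N S) \<subseteq> A_fam n t m"
    proof safe
      fix S s assume "S \<in> SS" "s \<in> fixing_exactly n N S"
      then have "s \<in> Sigma_n n" "s \<inter> (\<lambda>i. (i, i)) ` N = (\<lambda>i. (i, i)) ` S" "card S = t + m"
        by (auto simp: fixing_exactly_def SS_def)
      moreover have "{(i, i) | i. i \<in> {1..t + 2 * m}} = (\<lambda>i. (i, i)) ` N"
        by (auto simp: N_def)
      ultimately show "s \<in> A_fam n t m"
        by (simp add: A_fam_def card_image inj_on_def)
    qed
  qed (simp_all add: A_fam_def finite_Sigma_n)
  finally show ?thesis .
qed

lemma t_intersecting_subset: "t_intersecting t Y \<Longrightarrow> X \<subseteq> Y \<Longrightarrow> t_intersecting t X"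
  unfolding t_intersecting_def by blast

lemma simp_step_preserves_bounds:
  assumes "simp_step t X Y" "t_intersecting t X" "\<forall>T\<in>X. finite T \<and> card T \<le> c"
  shows "t_intersecting t Y \<and> (\<forall>T\<in>Y. finite T \<and> card T \<le> c)"
  using assms(1) unfolding simp_step_def
proof (elim disjE bexE conjE exE)
  fix A assume "Y = X - {A}"
  then show ?thesis using assms(2,3) t_intersecting_subset[of t X Y] by blast
next
  fix S Z assume "S \<in> X" "Z \<subset> S" "Y = X - {S} \<union> {Z}" "t_intersecting t Y"
  moreover have "finite Z \<and> card Z \<le> c"
    using \<open>S \<in> X\<close> \<open>Z \<subset> S\<close> assms(3) by (meson card_mono finite_subset le_trans psubset_imp_subset)
  ultimately show ?thesis using assms(3) by blast
qed

lemma simplification_preserves_bounds: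
  assumes "simplification t X Y" "t_intersecting t X" "\<forall>T\<in>X. finite T \<and> card T \<le> c"
  shows "t_intersecting t Y \<and> (\<forall>T\<in>Y. finite T \<and> card T \<le> c)"
proof -
  have "(simp_step t)\<^sup>*\<^sup>* X Y" using assms(1) by (simp add: simplification_def)
  then show ?thesis
    by (induction rule: rtranclp_induct) (use assms(2,3) simp_step_preserves_bounds in blast)+
qed

lemma peeling_level_bounds:
  assumes "peeling t q \<S> \<T>" "t_intersecting t \<S>" "\<forall>S\<in>\<S>. finite S \<and> card S \<le> q" "t \<le> q"
    and "j \<le> q - t"
  shows "t_intersecting t (\<T> j) \<and> (\<forall>T\<in>\<T> j. finite T \<and> card T \<le> t + j)"
  using assms(5)
proof (induction j rule: inc_induct)
  case base
  have "simplification t \<S> (\<T> (q - t))" using assms(1) by (simp add: peeling_def)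
  moreover have "\<forall>S\<in>\<S>. finite S \<and> card S \<le> t + (q - t)" using assms(3,4) by simp
  ultimately show ?case by (rule simplification_preserves_bounds[OF _ assms(2)])
next
  case (step j)
  have "Suc j \<in> {1..q - t}" using step.hyps by simp
  then have "simplification t (\<T> (Suc j) - W_fam t \<T> (Suc j)) (\<T> j)"
    using assms(1) unfolding peeling_def by (metis diff_Suc_1)
  moreover have "t_intersecting t (\<T> (Suc j) - W_fam t \<T> (Suc j))"
    using step.IH t_intersecting_subset by blast
  moreover have "\<forall>T\<in>\<T> (Suc j) - W_fam t \<T> (Suc j). finite T \<and> card T \<le> t + j"
    using step.IH by (auto simp: W_fam_def)
  ultimately show ?case by (rule simplification_preserves_bounds)
qed

lemma choose_mult_pow_le:
  assumes "a + j = m" "m \<le> t"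
  shows "(t choose a) * (t - m) ^ j \<le> (t choose m) * m ^ j"
  using assms
proof (induction j arbitrary: a)
  case 0
  then show ?case by simp
next
  case (Suc j)
  have step: "(t choose a) * (t - a) = Suc a * (t choose Suc a)"
    using binomial_absorb_comp[of t a] binomial_absorption[of a t] by (simp add: mult.commute)
  have "(t choose a) * (t - m) ^ Suc j = ((t choose a) * (t - m)) * (t - m) ^ j"
    by simp
  also have "\<dots> \<le> ((t choose a) * (t - a)) * (t - m) ^ j"
    using Suc.prems by (intro mult_le_mono1 mult_le_mono2) simp
  also have "\<dots> = Suc a * ((t choose Suc a) * (t - m) ^ j)"
    unfolding step by (simp only: mult.assoc)
  also have "\<dots> \<le> m * ((t choose m) * m ^ j)"
    using Suc.prems Suc.IH[of "Suc a"] by (intro mult_le_mono[of _ _ "_ * _"]) simp_all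
  finally show ?case by (simp add: mult.left_commute)
qed

lemma choose_mult_pow_le_real:
  fixes R :: real
  assumes "a + e = m" "m < t" "0 \<le> R"
  shows "real (t choose a) * R ^ e \<le> real (t choose m) * (real m * R / (real t - real m)) ^ e"
proof -
  define T where "T = real t - real m"
  have T: "T > 0" "T = real (t - m)" using assms(2) by (auto simp: T_def of_nat_diff)
  have "real (t choose a) * R ^ e = real (t choose a) * T ^ e * (R / T) ^ e"
    using T by (simp add: power_divide)
  also have "\<dots> \<le> real (t choose m) * real m ^ e * (R / T) ^ e"
  proof (intro mult_right_mono)
    have "(t choose a) * (t - m) ^ e \<le> (t choose m) * m ^ e"
      using assms(1,2) by (intro choose_mult_pow_le) simp_all
    then show "real (t choose a) * T ^ e \<le> real (t choose m) * real m ^ e"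
      unfolding T(2) by (metis of_nat_le_iff of_nat_mult of_nat_power)
  qed (use T assms(3) in simp)
  also have "\<dots> = real (t choose m) * (real m * R / T) ^ e"
    by (simp add: power_divide power_mult_distrib)
  finally show ?thesis unfolding T_def .
qed

lemma trace_exponents:
  fixes r k m a :: nat
  assumes "8 \<le> r" "m < k" "a + (r - 2) * k \<le> (r - 1) * m"
  shows "6 \<le> m - a" "2 * k - m - a \<le> 2 * (m - a)"
proof -
  have "r - 1 = Suc (r - 2)" using assms(1) by simp
  then have "(r - 1) * m = (r - 2) * m + m" by simp
  moreover have "(r - 2) * k = (r - 2) * m + (r - 2) * (k - m)"
    using assms(2) by (metis add_mult_distrib2 le_add_diff_inverse less_imp_le)
  ultimately have "a + (r - 2) * (k - m) \<le> m" using assms(3) by linarith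
  moreover have "6 * (k - m) \<le> (r - 2) * (k - m)" using assms(1) by (intro mult_le_mono1) simp
  ultimately show "6 \<le> m - a" "2 * k - m - a \<le> 2 * (m - a)" using assms(2) by linarith+
qed

lemma trace_ratio_sq_le:
  fixes r k t m :: nat
  assumes "m < k" "2 * k \<le> t" "k ^ 7 \<le> t ^ 2"
  shows "(real m * real (r * k) ^ 2 / (real t - real m)) ^ 2 \<le> 4 * real r ^ 4 / real k"
proof -
  have k: "real k > 0" and t: "real t - real m \<ge> real t / 2" "real t > 0"
    using assms(1,2) by linarith+
  have "real m * real (r * k) ^ 2 / (real t - real m) \<le> real k * real (r * k) ^ 2 / (real t / 2)"
    using assms(1) k t by (intro frac_le mult_right_mono) auto
  also have "\<dots> = 2 * real r ^ 2 * real k ^ 3 / real t"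
    by (simp add: power2_eq_square power3_eq_cube field_simps)
  finally have "(real m * real (r * k) ^ 2 / (real t - real m)) ^ 2 \<le> (2 * real r ^ 2 * real k ^ 3 / real t) ^ 2"
    using t by (intro power_mono) auto
  also have "\<dots> = 4 * real r ^ 4 * real k ^ 6 / real t ^ 2"
    by (simp add: power_divide power_mult_distrib flip: power_mult)
  also have "\<dots> \<le> 4 * real r ^ 4 * real k ^ 6 / real k ^ 7"
  proof (rule divide_left_mono)
    show "real k ^ 7 \<le> real t ^ 2" using assms(3) by (metis of_nat_le_iff of_nat_power)
    show "0 < real t ^ 2 * real k ^ 7" using k t by simp
  qed simp
  also have "\<dots> = 4 * real r ^ 4 / real k"
    using k by (simp add: eval_nat_numeral field_simps)
  finally show ?thesis .
qed

lemma trace_term_le: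
  fixes r k t m a :: nat and \<delta> :: real
  assumes r: "8 \<le> r" and mk: "m < k" and constraint: "a + (r - 2) * k \<le> (r - 1) * m"
    and tk: "2 * k \<le> t" "k ^ 7 \<le> t ^ 2"
    and k_large: "4 * real r ^ 4 \<le> real k" "128 * real r ^ 12 \<le> \<delta> * real k"
  shows "2 * real k ^ 2 * real ((t choose a) * (r * k) ^ (2 * k - m - a)) \<le> \<delta> * real (t choose m)"
proof -
  define e where "e = m - a"
  have e: "6 \<le> e" "2 * k - m - a \<le> 2 * e" "a + e = m"
    using trace_exponents[OF r mk constraint] unfolding e_def by auto
  \<comment> \<open>each unit of e costs a factor R in the trace count and gains m / (t - m) in the binomial\<close>
  define R where "R = real (r * k) ^ 2"
  define B where "B = real m * R / (real t - real m)"
  have k: "real k > 0" and tm: "real t - real m > 0" using mk tk(1) by linarith+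
  have "1 \<le> r * k" using r mk by simp
  then have rk: "1 \<le> real (r * k)" by (simp only: of_nat_1 of_nat_le_iff)
  then have R: "R \<ge> 1" unfolding R_def by (rule one_le_power)
  have B: "B \<ge> 0" using tm R by (simp add: B_def)
  have B_sq: "B ^ 2 \<le> 4 * real r ^ 4 / real k"
    unfolding B_def R_def using mk tk by (rule trace_ratio_sq_le)
  also have "\<dots> \<le> 1" using k_large(1) k by simp
  finally have "B \<le> 1" using B by (simp add: power_le_one_iff)
  have "real ((t choose a) * (r * k) ^ (2 * k - m - a)) \<le> real (t choose a) * R ^ e"
  proof -
    have "real (r * k) ^ (2 * k - m - a) \<le> real (r * k) ^ (2 * e)"
      using e(2) rk by (rule power_increasing)
    then show ?thesis by (simp add: R_def power_mult mult_left_mono)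
  qed
  also have "\<dots> \<le> real (t choose m) * B ^ e"
    unfolding B_def using e(3) mk tk(1) R by (intro choose_mult_pow_le_real) simp_all
  also have "\<dots> \<le> real (t choose m) * (4 * real r ^ 4 / real k) ^ 3"
  proof (intro mult_left_mono)
    have "B ^ e \<le> B ^ 6" by (rule power_decreasing[OF e(1) B \<open>B \<le> 1\<close>])
    also have "\<dots> = (B ^ 2) ^ 3" by (simp flip: power_mult)
    also have "\<dots> \<le> (4 * real r ^ 4 / real k) ^ 3" using B_sq B by (intro power_mono) simp_all
    finally show "B ^ e \<le> (4 * real r ^ 4 / real k) ^ 3" .
  qed simp
  finally have "2 * real k ^ 2 * real ((t choose a) * (r * k) ^ (2 * k - m - a))
      \<le> real (t choose m) * (128 * real r ^ 12 / real k)"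
    using k by (simp add: field_simps power_mult_distrib eval_nat_numeral)
  also have "\<dots> \<le> real (t choose m) * \<delta>"
    using k_large(2) k by (intro mult_left_mono) (simp_all add: divide_le_eq)
  finally show ?thesis by (simp add: mult.commute)
qed

lemma sum_card_Int_eq_sum_card_index:
  assumes "finite I" "finite B"
  shows "(\<Sum>i\<in>I. card (B \<inter> A i)) = (\<Sum>x\<in>B. card {i\<in>I. x \<in> A i})"
proof -
  have "(\<Sum>i\<in>I. card (B \<inter> A i)) = (\<Sum>i\<in>I. \<Sum>x\<in>B. if x \<in> A i then 1 else 0)"
    using assms by (simp add: sum.If_cases Int_def)
  also have "\<dots> = (\<Sum>x\<in>B. \<Sum>i\<in>I. if x \<in> A i then 1 else 0)"
    by (rule sum.swap)
  also have "\<dots> = (\<Sum>x\<in>B. card {i\<in>I. x \<in> A i})"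
    using assms by (simp add: sum.If_cases Int_def)
  finally show ?thesis .
qed

lemma le_pred_mult_add:
  fixes r t m x y :: nat
  assumes "1 \<le> r" "r * t \<le> (r - 1) * y + r * x" "y + x = t + m"
  shows "t \<le> (r - 1) * m + x"
proof -
  obtain s where r: "r = Suc s" using assms(1) by (cases r) auto
  have "s * y + s * x = s * t + s * m" using assms(3) by (metis distrib_left)
  then show ?thesis using assms(2) unfolding r by simp
qed

text \<open>The core C has the least size t - (r - 2) k allowed by pairwise t-intersection, since
  A i - C is covered by the r - 1 sets A i - A j of at most k elements each.\<close>

locale tight_system =
  fixes A :: "nat \<Rightarrow> cell set" and r k t :: nat
  assumes r_ge_3: "r \<ge> 3"
    and finite_A: "\<And>i. i \<in> {1..r} \<Longrightarrow> finite (A i)"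
    and card_A: "\<And>i. i \<in> {1..r} \<Longrightarrow> card (A i) = t + k"
    and card_Int_A: "\<And>i j. i \<in> {1..r} \<Longrightarrow> j \<in> {1..r} \<Longrightarrow> t \<le> card (A i \<inter> A j)"
    and card_core: "card (\<Inter>i\<in>{1..r}. A i) + (r - 2) * k = t"
begin

abbreviation U :: "cell set" where "U \<equiv> \<Union>i\<in>{1..r}. A i"
abbreviation C :: "cell set" where "C \<equiv> \<Inter>i\<in>{1..r}. A i"

definition deg :: "cell \<Rightarrow> nat" where "deg x = card {i \<in> {1..r}. x \<in> A i}"

lemma finite_U: "finite U"
  using finite_A by blast

lemma core_subset: "i \<in> {1..r} \<Longrightarrow> C \<subseteq> A i"
  by blast

lemma core_subset_U: "C \<subseteq> U"
  using r_ge_3 by force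

lemma finite_core: "finite C"
  using core_subset_U finite_U finite_subset by blast

lemma card_Diff_A_le: "i \<in> {1..r} \<Longrightarrow> j \<in> {1..r} \<Longrightarrow> card (A i - A j) \<le> k"
  using card_A card_Int_A card_Diff_subset_Int[of "A i" "A j"] finite_A by fastforce

lemma pred_r_mult: "(r - 1) * k = (r - 2) * k + k"
proof -
  have "r - 1 = Suc (r - 2)" using r_ge_3 by simp
  then show ?thesis by simp
qed

lemma card_A_Diff_core: "i \<in> {1..r} \<Longrightarrow> card (A i - C) = (r - 1) * k"
  using card_A card_core pred_r_mult card_Diff_subset[OF finite_core core_subset] by simp

lemma in_all_but_one:
  assumes x: "x \<in> U" and pq: "p \<in> {1..r}" "q \<in> {1..r}" "x \<notin> A p" "x \<notin> A q"
  shows "p = q"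
proof (rule ccontr)
  assume "p \<noteq> q"
  obtain i where i: "i \<in> {1..r}" "x \<in> A i" using x by blast
  define J where "J = {1..r} - {i, q}"
  have "p \<in> J" using \<open>p \<noteq> q\<close> i pq unfolding J_def by auto
  have cover: "A i - C \<subseteq> (\<Union>j\<in>J. A i - A j) \<union> (A i - A q - {x})"
    using \<open>p \<in> J\<close> i pq unfolding J_def by auto
  have "i \<noteq> q" using i pq by auto
  then have card_J: "card J = r - 2"
    using i pq unfolding J_def by (simp add: card_Diff_subset)
  have "(r - 1) * k \<le> card ((\<Union>j\<in>J. A i - A j) \<union> (A i - A q - {x}))"
    using card_A_Diff_core[OF i(1)] card_mono[OF _ cover] finite_A i(1) unfolding J_def by simp
  also have "\<dots> \<le> card (\<Union>j\<in>J. A i - A j) + card (A i - A q - {x})"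
    by (rule card_Un_le)
  also have "\<dots> \<le> (\<Sum>j\<in>J. card (A i - A j)) + card (A i - A q - {x})"
    by (intro add_right_mono card_UN_le) (simp add: J_def)
  also have "\<dots> < (r - 2) * k + k"
  proof (intro add_le_less_mono)
    show "(\<Sum>j\<in>J. card (A i - A j)) \<le> (r - 2) * k"
      using sum_mono[of J "\<lambda>j. card (A i - A j)" "\<lambda>_. k"] card_Diff_A_le i(1) card_J
      unfolding J_def by simp
    have "0 < card (A i - A q)"
      using i pq finite_A[OF i(1)] by (auto simp: card_gt_0_iff)
    then show "card (A i - A q - {x}) < k"
      using card_Diff_A_le[OF i(1) pq(2)] i pq by (simp add: card_Diff_singleton)
  qed
  finally show False
    using pred_r_mult by simp
qed

lemma deg_core: "x \<in> C \<Longrightarrow> deg x = r"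
proof -
  assume "x \<in> C"
  then have "{i \<in> {1..r}. x \<in> A i} = {1..r}" by blast
  then show ?thesis unfolding deg_def by simp
qed

lemma deg_not_core: "x \<notin> C \<Longrightarrow> deg x \<le> r - 1"
proof -
  assume "x \<notin> C"
  then have "{i \<in> {1..r}. x \<in> A i} \<subset> {1..r}" by blast
  then have "deg x < card {1..r}"
    unfolding deg_def by (rule psubset_card_mono[rotated]) simp
  then show ?thesis by simp
qed

lemma deg_U: "x \<in> U \<Longrightarrow> r - 1 \<le> deg x"
proof -
  assume "x \<in> U"
  let ?missed = "{i \<in> {1..r}. x \<notin> A i}"
  have "card ?missed \<le> Suc 0"
  proof (subst card_le_Suc0_iff_eq)
    show "finite ?missed" by simp
    show "\<forall>p\<in>?missed. \<forall>q\<in>?missed. p = q" using in_all_but_one[OF \<open>x \<in> U\<close>] by blast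
  qed
  moreover have "deg x = card ({1..r} - ?missed)"
    unfolding deg_def by (rule arg_cong[where f = card]) blast
  moreover have "card ({1..r} - ?missed) = r - card ?missed"
    by (subst card_Diff_subset) auto
  ultimately show ?thesis by linarith
qed

lemma sum_card_Int_A: "finite W \<Longrightarrow> (\<Sum>i\<in>{1..r}. card (W \<inter> A i)) = (\<Sum>x\<in>W. deg x)"
  unfolding deg_def by (rule sum_card_Int_eq_sum_card_index) simp

lemma card_U_Diff_core_le: "card (U - C) \<le> r * k"
proof -
  have "(\<Sum>i\<in>{1..r}. card (U \<inter> A i)) = r * (t + k)"
    using card_A by (simp add: Int_absorb1 UN_upper)
  then have "r * (t + k) = (\<Sum>x\<in>U - C. deg x) + (\<Sum>x\<in>C. deg x)"
    using sum_card_Int_A[OF finite_U] sum.subset_diff[OF core_subset_U finite_U] by simp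
  also have "\<dots> \<ge> (r - 1) * card (U - C) + r * card C"
    using deg_U deg_core sum_mono[of "U - C" "\<lambda>_. r - 1" deg] by (simp add: mult.commute)
  finally have "(r - 1) * card (U - C) + r * card C \<le> r * (t + k)" .
  moreover have "t + k = card C + (r - 1) * k"
    using card_core pred_r_mult by simp
  then have "r * (t + k) = r * card C + (r - 1) * (r * k)"
    by (simp add: distrib_left mult.left_commute)
  ultimately have "(r - 1) * card (U - C) \<le> (r - 1) * (r * k)" by linarith
  then show ?thesis using r_ge_3 by simp
qed

text \<open>Candidates for the trace T \<inter> U of a member T of the pruned family.\<close>

definition traces :: "nat \<Rightarrow> nat \<Rightarrow> cell set set" where
  "traces m a = {W. W \<subseteq> U \<and> card W = t + m \<and> card (C - W) = a \<and> (\<forall>i\<in>{1..r}. t \<le> card (W \<inter> A i))}"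

lemma trace_finite: "W \<in> traces m a \<Longrightarrow> finite W"
  using finite_subset[OF _ finite_U] by (auto simp: traces_def)

lemma card_trace_Diff_core: "W \<in> traces m a \<Longrightarrow> card (W - C) = (r - 2) * k + m + a"
proof -
  assume W: "W \<in> traces m a"
  have "card C = card (C \<inter> W) + card (C - W)" "card W = card (W \<inter> C) + card (W - C)"
    using card_Int_Diff finite_core trace_finite[OF W] by blast+
  moreover have "card (C \<inter> W) = card (W \<inter> C)" by (simp only: Int_commute)
  moreover have "card W = t + m" "card (C - W) = a" using W by (auto simp: traces_def)
  ultimately show ?thesis using card_core by linarith
qed

lemma trace_constraint:
  assumes W: "W \<in> traces m a"
  shows "a + (r - 2) * k \<le> (r - 1) * m"
proof -
  have fin: "finite W" using trace_finite[OF W] .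
  have card_W: "card W = t + m" "card (C - W) = a" and W_A: "\<forall>i\<in>{1..r}. t \<le> card (W \<inter> A i)"
    using W by (auto simp: traces_def)
  have "r * t \<le> (\<Sum>i\<in>{1..r}. card (W \<inter> A i))"
    using sum_mono[of "{1..r}" "\<lambda>_. t"] W_A by simp
  also have "\<dots> = (\<Sum>x\<in>W - C. deg x) + (\<Sum>x\<in>W \<inter> C. deg x)"
    using sum_card_Int_A[OF fin] sum.subset_diff[of "W \<inter> C" W deg] fin
    by (simp add: Diff_Int)
  also have "\<dots> \<le> (r - 1) * card (W - C) + r * card (W \<inter> C)"
    using deg_not_core deg_core sum_mono[of "W - C" deg "\<lambda>_. r - 1"] by (simp add: mult.commute)
  finally have main: "r * t \<le> (r - 1) * card (W - C) + r * card (W \<inter> C)" .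
  have "card C = card (C \<inter> W) + card (C - W)" "card W = card (W \<inter> C) + card (W - C)"
    using card_Int_Diff finite_core fin by blast+
  moreover have "card (C \<inter> W) = card (W \<inter> C)" by (simp only: Int_commute)
  ultimately have parts: "card (W \<inter> C) + a = card C" "card (W - C) + card (W \<inter> C) = t + m"
    using card_W by linarith+
  have "t \<le> (r - 1) * m + card (W \<inter> C)"
    using r_ge_3 by (intro le_pred_mult_add[OF _ main parts(2)]) simp
  then show ?thesis using parts(1) card_core by linarith
qed

lemma finite_traces: "finite (traces m a)"
  unfolding traces_def by (rule finite_subset[of _ "Pow U"]) (use finite_U in auto)

lemma card_traces_le:
  assumes "1 \<le> k"
  shows "card (traces m a) \<le> (t choose a) * (r * k) ^ (2 * k - m - a)"
proof -
  define b where "b = card (U - C) - ((r - 2) * k + m + a)"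
  \<comment> \<open>a trace is determined by what it omits from C and from U - C\<close>
  define omitted where "omitted W = (C - W, (U - C) - W)" for W
  have inj: "inj_on omitted (traces m a)"
  proof (rule inj_onI)
    fix W W' assume "W \<in> traces m a" "W' \<in> traces m a" "omitted W = omitted W'"
    then have "W \<subseteq> U" "W' \<subseteq> U" "C - W = C - W'" "(U - C) - W = (U - C) - W'"
      by (simp_all add: traces_def omitted_def)
    then show "W = W'" by blast
  qed
  have img: "omitted ` traces m a \<subseteq> {X. X \<subseteq> C \<and> card X = a} \<times> {Y. Y \<subseteq> U - C \<and> card Y = b}"
  proof (rule image_subsetI)
    fix W assume W: "W \<in> traces m a"
    then have "(U - C) - W = (U - C) - (W - C)" "W - C \<subseteq> U - C" by (auto simp: traces_def)
    then have "card ((U - C) - W) = b"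
      unfolding b_def using card_trace_Diff_core[OF W] finite_U
      by (simp add: card_Diff_subset finite_subset)
    then show "omitted W \<in> {X. X \<subseteq> C \<and> card X = a} \<times> {Y. Y \<subseteq> U - C \<and> card Y = b}"
      using W by (auto simp: omitted_def traces_def)
  qed
  have "card (traces m a) = card (omitted ` traces m a)"
    using inj by (simp add: card_image)
  also have "\<dots> \<le> card ({X. X \<subseteq> C \<and> card X = a} \<times> {Y. Y \<subseteq> U - C \<and> card Y = b})"
    by (rule card_mono[OF _ img]) (use finite_core finite_U in simp)
  also have "\<dots> = (card C choose a) * (card (U - C) choose b)"
    using finite_core finite_U by (simp add: n_subsets card_cartesian_product)
  also have "\<dots> \<le> (t choose a) * (r * k) ^ (2 * k - m - a)"
  proof (rule mult_le_mono)
    show "card C choose a \<le> t choose a"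
      using card_core by (intro binomial_right_mono) linarith
    have "r - 2 + 2 = r" using r_ge_3 by simp
    then have "r * k = (r - 2) * k + 2 * k" by (metis add_mult_distrib)
    then have "b \<le> 2 * k - m - a"
      using card_U_Diff_core_le unfolding b_def by linarith
    then have "(r * k) ^ b \<le> (r * k) ^ (2 * k - m - a)"
      using assms r_ge_3 by (intro power_increasing) simp_all
    moreover have "card (U - C) choose b \<le> (r * k) ^ b"
      using binomial_le_pow[of b "card (U - C)"] power_mono[OF card_U_Diff_core_le, of b]
      unfolding b_def by linarith
    ultimately show "card (U - C) choose b \<le> (r * k) ^ (2 * k - m - a)" by linarith
  qed
  finally show ?thesis .
qed

lemma trace_of_pruned_member:
  assumes A_in: "\<forall>i\<in>{1..r}. A i \<in> K" and K: "t_intersecting t K" "\<forall>T\<in>K. finite T \<and> card T \<le> t + k"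
    and T: "T \<in> K" "\<not> (T \<subseteq> U \<and> card T = t + k)"
  obtains m a where "m < k" "a < k" "T \<inter> U \<in> traces m a"
proof -
  define W where "W = T \<inter> U"
  have "finite W" using T K(2) by (auto simp: W_def)
  have W_A: "t \<le> card (W \<inter> A i)" if "i \<in> {1..r}" for i
  proof -
    have "W \<inter> A i = T \<inter> A i" using that by (auto simp: W_def)
    then show ?thesis using K(1) T(1) A_in that unfolding t_intersecting_def by simp
  qed
  have "t \<le> card W"
    using W_A[of 1] r_ge_3 card_mono[OF \<open>finite W\<close>, of "W \<inter> A 1"] by simp
  moreover have "card W < t + k"
  proof (cases "T \<subseteq> U")
    case True
    then have "W = T" by (auto simp: W_def)
    moreover have "card T \<le> t + k" using T(1) K(2) by blast
    ultimately show ?thesis using T(2) True by auto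
  next
    case False
    then have "W \<subset> T" by (auto simp: W_def)
    moreover have "finite T" "card T \<le> t + k" using T(1) K(2) by blast+
    ultimately show ?thesis using psubset_card_mono by (metis order.strict_trans2)
  qed
  ultimately obtain m where m: "card W = t + m" "m < k"
    using le_Suc_ex by force
  define a where "a = card (C - W)"
  have "W \<in> traces m a" using m(1) W_A unfolding traces_def a_def W_def by blast
  then have "a + (r - 2) * k \<le> (r - 1) * m" by (rule trace_constraint)
  then have "a < k"
    using m(2) pred_r_mult mult_le_mono2[of m k "r - 2"] by (simp add: algebra_simps)
  then show ?thesis using that m(2) \<open>W \<in> traces m a\<close> unfolding W_def by blast
qed

lemma card_generated_le:
  assumes A_in: "\<forall>i\<in>{1..r}. A i \<in> K" and K: "t_intersecting t K" "\<forall>T\<in>K. finite T \<and> card T \<le> t + k"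
    and F: "F \<subseteq> Sigma_n n"
  shows "card (generated F (K - {T. T \<subseteq> U \<and> card T = t + k}))
    \<le> (\<Sum>m<k. \<Sum>a<k. card (traces m a) * fact (n - (t + m)))"
proof -
  let ?ext = "\<lambda>W. {s \<in> Sigma_n n. W \<subseteq> s}"
  have "generated F (K - {T. T \<subseteq> U \<and> card T = t + k}) \<subseteq> (\<Union>m<k. \<Union>a<k. \<Union>W\<in>traces m a. ?ext W)"
  proof
    fix s assume "s \<in> generated F (K - {T. T \<subseteq> U \<and> card T = t + k})"
    then obtain T where s: "s \<in> F" "T \<subseteq> s" and T: "T \<in> K" "\<not> (T \<subseteq> U \<and> card T = t + k)"
      unfolding generated_def by blast
    obtain m a where "m < k" "a < k" "T \<inter> U \<in> traces m a"
      using trace_of_pruned_member[OF A_in K T] .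
    moreover have "s \<in> ?ext (T \<inter> U)" using s F by auto
    ultimately show "s \<in> (\<Union>m<k. \<Union>a<k. \<Union>W\<in>traces m a. ?ext W)" by blast
  qed
  then have "card (generated F (K - {T. T \<subseteq> U \<and> card T = t + k}))
      \<le> card (\<Union>m<k. \<Union>a<k. \<Union>W\<in>traces m a. ?ext W)"
    by (rule card_mono[rotated]) (simp add: finite_Sigma_n finite_traces)
  also have "\<dots> \<le> (\<Sum>m<k. \<Sum>a<k. \<Sum>W\<in>traces m a. card (?ext W))"
    by (intro order_trans[OF card_UN_le] sum_mono card_UN_le finite_traces)
      (simp_all add: finite_traces finite_Sigma_n)
  also have "\<dots> \<le> (\<Sum>m<k. \<Sum>a<k. \<Sum>W\<in>traces m a. fact (n - (t + m)))"
  proof (intro sum_mono)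
    fix m a W assume W: "W \<in> traces m a"
    then have "card W = t + m" by (simp add: traces_def)
    then show "card (?ext W) \<le> fact (n - (t + m))"
      using card_Sigma_n_containing_le[OF trace_finite[OF W]] by simp
  qed
  also have "\<dots> = (\<Sum>m<k. \<Sum>a<k. card (traces m a) * fact (n - (t + m)))"
    by simp
  finally show ?thesis .
qed

lemma card_traces_fact_le:
  fixes \<delta> :: real
  assumes "8 \<le> r" "m < k" "t + 3 * k \<le> n" "2 * k \<le> t" "k ^ 7 \<le> t ^ 2"
    and "4 * real r ^ 4 \<le> real k" "128 * real r ^ 12 \<le> \<delta> * real k"
  shows "real k ^ 2 * real (card (traces m a) * fact (n - (t + m))) \<le> \<delta> * real (card (A_fam n t m))"
proof -
  have "0 \<le> \<delta> * real k" using assms(7) by (rule order_trans[rotated]) simp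
  then have "0 \<le> \<delta>" using assms(2) by (simp add: zero_le_mult_iff)
  show ?thesis
  proof (cases "traces m a = {}")
    case True
    then show ?thesis using \<open>0 \<le> \<delta>\<close> by simp
  next
    case False
    then obtain W where "W \<in> traces m a" by blast
    then have constraint: "a + (r - 2) * k \<le> (r - 1) * m" by (rule trace_constraint)
    have "1 \<le> k" using assms(2) by simp
    define f where "f = real (fact (n - (t + m)) :: nat)"
    have "real (card (traces m a)) \<le> real ((t choose a) * (r * k) ^ (2 * k - m - a))"
      using card_traces_le[OF \<open>1 \<le> k\<close>] by (simp only: of_nat_le_iff)
    then have "2 * real k ^ 2 * real (card (traces m a)) * f
        \<le> 2 * real k ^ 2 * real ((t choose a) * (r * k) ^ (2 * k - m - a)) * f"
      by (intro mult_right_mono mult_left_mono) (simp_all add: f_def)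
    also have "\<dots> \<le> \<delta> * real (t choose m) * f"
      using trace_term_le[OF assms(1,2) constraint assms(4-7)] by (intro mult_right_mono) (simp_all add: f_def)
    also have "\<dots> \<le> \<delta> * real ((t + 2 * m) choose m) * f"
      using \<open>0 \<le> \<delta>\<close> by (intro mult_right_mono mult_left_mono) (simp_all add: binomial_right_mono f_def)
    also have "\<dots> = \<delta> * real (((t + 2 * m) choose m) * fact (n - t - m))"
      by (simp add: f_def)
    also have "\<dots> \<le> \<delta> * real (2 * card (A_fam n t m))"
    proof (intro mult_left_mono)
      have "t + 3 * m \<le> n" using assms(2,3) by linarith
      then show "real (((t + 2 * m) choose m) * fact (n - t - m)) \<le> real (2 * card (A_fam n t m))"
        by (simp only: of_nat_le_iff card_A_fam_ge)
    qed (rule \<open>0 \<le> \<delta>\<close>)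
    finally have "2 * (real k ^ 2 * (real (card (traces m a)) * f))
        \<le> 2 * (\<delta> * real (card (A_fam n t m)))"
      by (simp only: of_nat_mult of_nat_numeral mult_ac)
    then show ?thesis unfolding f_def of_nat_mult by simp
  qed
qed

end

lemma twice_le_of_pow7_le_sq:
  fixes k t :: nat
  assumes "2 \<le> k" "k ^ 7 \<le> t ^ 2"
  shows "2 * k \<le> t"
proof -
  have "4 \<le> k ^ 5" using power_mono[OF assms(1), of 5] by simp
  have "(2 * k) ^ 2 = 4 * k ^ 2" by (simp add: power_mult_distrib)
  also have "\<dots> \<le> k ^ 5 * k ^ 2" using \<open>4 \<le> k ^ 5\<close> by (rule mult_le_mono1)
  also have "\<dots> = k ^ 7" by (simp flip: power_add)
  finally have "(2 * k) ^ 2 \<le> t ^ 2" using assms(2) by (rule order_trans)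
  then show ?thesis by (rule power2_le_imp_le) simp
qed

lemma card_generated_pruned_le:
  fixes \<delta> :: real
  assumes r: "8 \<le> r" and K: "t_intersecting t K" "\<forall>T\<in>K. finite T \<and> card T \<le> t + k"
    and A: "\<forall>i\<in>{1..r}. A i \<in> K \<and> card (A i) = t + k"
    and core: "card (\<Inter>i\<in>{1..r}. A i) + (r - 2) * k = t"
    and F: "F \<subseteq> Sigma_n n"
    and k: "t + 3 * k \<le> n" "k ^ 7 \<le> t ^ 2"
    and \<delta>: "0 < \<delta>" "4 * real r ^ 4 + 128 * real r ^ 12 / \<delta> \<le> real k"
  shows "real (card (generated F (K - {T. T \<subseteq> (\<Union>i\<in>{1..r}. A i) \<and> card T = t + k})))
    \<le> \<delta> * real (Max ((\<lambda>j. card (A_fam n t j)) ` {0..(n - t) div 2}))"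
    (is "_ \<le> \<delta> * real ?Max")
proof -
  have "0 \<le> 128 * real r ^ 12 / \<delta>" "1 \<le> real r ^ 4" using \<delta>(1) r by simp_all
  then have "4 * real r ^ 4 \<le> real k" "128 * real r ^ 12 / \<delta> \<le> real k" using \<delta>(2) by linarith+
  then have k_large: "4 * real r ^ 4 \<le> real k" "128 * real r ^ 12 \<le> \<delta> * real k"
    using \<delta>(1) by (simp_all add: pos_divide_le_eq mult.commute)
  have "4 \<le> k" using k_large(1) \<open>1 \<le> real r ^ 4\<close> by linarith
  then have "2 * k \<le> t" using k(2) by (intro twice_le_of_pow7_le_sq) simp_all
  interpret tight_system A r k t
  proof
    show "3 \<le> r" using r by simp
    show "card (\<Inter>i\<in>{1..r}. A i) + (r - 2) * k = t" by (rule core)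
    show "finite (A i)" "card (A i) = t + k" if "i \<in> {1..r}" for i
      using A that \<open>4 \<le> k\<close> by (auto intro: card_ge_0_finite)
    show "t \<le> card (A i \<inter> A j)" if "i \<in> {1..r}" "j \<in> {1..r}" for i j
      using A K(1) that unfolding t_intersecting_def by blast
  qed
  have trace_term: "real (card (traces m a) * fact (n - (t + m))) \<le> \<delta> / real k ^ 2 * real ?Max"
    if "m < k" for m a
  proof -
    have "2 * m \<le> n - t" using that k(1) by linarith
    then have "m \<in> {0..(n - t) div 2}" using div_le_mono[of "2 * m" "n - t" 2] by simp
    then have "card (A_fam n t m) \<le> ?Max"
      by (intro Max_ge finite_imageI imageI) simp_all
    then have "\<delta> * real (card (A_fam n t m)) \<le> \<delta> * real ?Max"
      using \<delta>(1) by (intro mult_left_mono) simp_all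
    then have "real k ^ 2 * real (card (traces m a) * fact (n - (t + m))) \<le> \<delta> * real ?Max"
      by (rule order_trans[OF card_traces_fact_le[OF r that k(1) \<open>2 * k \<le> t\<close> k(2) k_large]])
    then show ?thesis using \<open>4 \<le> k\<close> by (simp add: field_simps)
  qed
  have "card (generated F (K - {T. T \<subseteq> U \<and> card T = t + k}))
      \<le> (\<Sum>m<k. \<Sum>a<k. card (traces m a) * fact (n - (t + m)))"
    using A K F by (intro card_generated_le) auto
  then have "real (card (generated F (K - {T. T \<subseteq> U \<and> card T = t + k})))
      \<le> (\<Sum>m<k. \<Sum>a<k. real (card (traces m a) * fact (n - (t + m))))"
    by (simp only: of_nat_le_iff flip: of_nat_sum)
  also have "\<dots> \<le> (\<Sum>m<k. \<Sum>a<k. \<delta> / real k ^ 2 * real ?Max)"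
    using trace_term by (intro sum_mono) simp
  also have "\<dots> = \<delta> * real ?Max"
    using \<open>4 \<le> k\<close> by (simp add: power2_eq_square)
  finally show ?thesis .
qed

lemma pow7_le_sq_of_le_powr:
  fixes \<epsilon> :: real
  assumes "0 < \<epsilon>" "1 \<le> k" "real k \<le> real t powr (2/7 - \<epsilon>/2)"
  shows "k ^ 7 \<le> t ^ 2"
proof -
  have "t \<noteq> 0"
  proof
    assume "t = 0"
    then show False using assms(2,3) by simp
  qed
  then have "real t powr (2/7 - \<epsilon>/2) \<le> real t powr (2/7)"
    using assms(1) by (intro powr_mono) auto
  then have "real k ^ 7 \<le> (real t powr (2/7)) ^ 7"
    using assms(3) by (intro power_mono) auto
  also have "\<dots> = real t powr (real 7 * (2/7))"
    using \<open>t \<noteq> 0\<close> by (subst powr_power) auto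
  also have "\<dots> = real t ^ 2"
    using \<open>t \<noteq> 0\<close> by (simp add: powr_realpow)
  finally show ?thesis by (simp flip: of_nat_power)
qed

theorem corollary5p3:
  fixes \<epsilon> :: real and r :: nat
  assumes "\<epsilon> > 0" and "r \<ge> 100"
    and "(3 * real r - 1) / (real r - 1) * (2/7 - \<epsilon>/2) < 6/7 - \<epsilon>"
  shows "\<forall>\<delta>>0. \<exists>M::real. \<exists>\<eta>>0. \<forall>n t q k \<S> \<T> (A :: nat \<Rightarrow> cell set) \<F>.
     real n powr 0.99 < real t \<and> t < n \<and> t \<le> q \<and> q \<le> n \<and>
     (\<forall>S \<in> \<S>. partial_perm n S \<and> card S \<le> q) \<and> t_intersecting t \<S> \<and>
     peeling t q \<S> \<T> \<and>
     1 \<le> k \<and> k \<le> q - t \<and> real k \<le> real t powr (2/7 - \<epsilon>/2) \<and>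
     (\<forall>i \<in> {1..r}. A i \<in> W_fam t \<T> k) \<and>
     int (card (\<Inter>i \<in> {1..r}. A i)) = int t - (int r - 2) * int k \<and>
     \<F> \<subseteq> Sigma_n n \<and>
     real t \<ge> M \<and> real k \<ge> M \<and> real k < \<eta> * real (n - t)
     \<longrightarrow> real (card (generated \<F> (\<T> k - {T. T \<subseteq> (\<Union>i \<in> {1..r}. A i) \<and> card T = t + k})))
         \<le> \<delta> * real (Max ((\<lambda>j. card (A_fam n t j)) ` {0..(n - t) div 2}))"
proof (intro allI impI, goal_cases)
  case (1 \<delta>)
  let ?M = "4 * real r ^ 4 + 128 * real r ^ 12 / \<delta>"
  show ?case
  proof (rule exI[of _ ?M], rule exI[of _ "1/3"], intro conjI allI impI, goal_cases)
    case (2 n t q k \<S> \<T> A \<F>)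
    then have "peeling t q \<S> \<T>" "t_intersecting t \<S>" "\<forall>S\<in>\<S>. finite S \<and> card S \<le> q"
      "t \<le> q" "k \<le> q - t"
      using finite_partial_perm by auto
    then have K: "t_intersecting t (\<T> k) \<and> (\<forall>T\<in>\<T> k. finite T \<and> card T \<le> t + k)"
      by (rule peeling_level_bounds)
    have "int (card (\<Inter>i\<in>{1..r}. A i)) + int (r - 2) * int k = int t"
      using 2 assms(2) by (simp add: of_nat_diff algebra_simps)
    then have core: "card (\<Inter>i\<in>{1..r}. A i) + (r - 2) * k = t"
      by (metis of_nat_add of_nat_mult of_nat_eq_iff)
    from 2 have "real k < 1 / 3 * real (n - t)" by blast
    then have "real (3 * k) < real (n - t)" by simp
    then have n: "t + 3 * k \<le> n" by (simp only: of_nat_less_iff)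
    have k7: "k ^ 7 \<le> t ^ 2" using 2 assms(1) by (intro pow7_le_sq_of_le_powr) auto
    from 2 have "\<forall>i\<in>{1..r}. A i \<in> \<T> k \<and> card (A i) = t + k" "\<F> \<subseteq> Sigma_n n"
      "?M \<le> real k" by (auto simp: W_fam_def)
    moreover have "8 \<le> r" using assms(2) by simp
    ultimately show ?case
      using card_generated_pruned_le[OF _ K[THEN conjunct1] K[THEN conjunct2] _ core _ n k7 1]
      by blast
  qed simp
qed

end
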